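(* Consider the generic SURQT model (6) described in the context, and let \[ \mathbf{Q}_2=\mathbf{Q}_1-\mathrm{diag}\!\left(\frac{\theta_i}{\theta_i+\delta_i}\right)\frac{\partial\mathbf{f}(\mathbf 0)}{\partial\mathbf{x}}-\mathrm{diag}\,\mathbf{g}(\mathbf 1),\qquad \mathbf{Q}_1=\frac{\partial\mathbf{f}(\mathbf 0)}{\partial\mathbf{x}}-\mathbf{D}_\theta, \] where $\mathrm{diag}\,\mathbf{g}(\mathbf 1)=\mathrm{diag}(g_1^R(\mathbf 1),\dots,g_N^R(\mathbf 1))$. If $s(\mathbf{Q}_2)>0$, then for any solution $(\mathbf{R}(t),\mathbf{T}(t))$ with initial value in $\Omega$ and $\mathbf{R}(0)>\mathbf 0$ there is $c>0$ such that $\liminf_{t\to\infty}R_i(t)\ge c$ for all $1\le i\le N$ (the rumor is persistent).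
   Context: $V=\{1,\dots,N\}$; $G_R=(V,E_R)$ and $G_T=(V,E_T)$ are strongly connected directed graphs. $\theta_i>0,\delta_i>0$; $\mathbf{D}_\theta=\mathrm{diag}(\theta_i)$. The functions $f_i^T,g_i^R:\mathbb{R}^N\to\mathbb{R}$ satisfy: (C1) $f_i^T$ depends on $x_j$ iff $(i,j)\in E_R$, $g_i^R$ depends on $x_j$ iff $(i,j)\in E_T$; (C2) $f_i^T(\mathbf 0)=g_i^R(\mathbf 0)=0$; (C3) twice continuously differentiable; (C4) strictly increasing in each argument; (C5) concave. $\mathbf{f}=(f_1^T,\dots,f_N^T)^T$ with Jacobian $\frac{\partial\mathbf{f}(\mathbf 0)}{\partial\mathbf x}$ at the origin; $\mathbf 1=(1,\dots,1)$. $s(\mathbf{A})$ is the maximum real part of an eigenvalue of $\mathbf{A}$. The generic SURQT model (6) is, for $i=1,\dots,N$, \[ \frac{dR_i}{dt}=T_i f_i^T(\mathbf{R})-R_i g_i^R(\mathbf{T})-\theta_iR_i,\qquad \frac{dT_i}{dt}=R_i g_i^R(\mathbf{T})-T_i f_i^T(\mathbf{R})+\delta_i(1-R_i-T_i), \] on $\Omega=\{(x_1,\dots,x_{2N})\in\mathbb{R}_+^{2N}: x_i+x_{N+i}\le1\}$. $\mathbf{R}(0)>\mathbf 0$ means every component is positive. *)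

theory Defs
  imports "HOL-Analysis.Analysis"
begin

text \<open>Vertex set V = the finite index type 'n (so N = CARD('n)).\<close>

definition strongly_connected :: "('n \<times> 'n) set \<Rightarrow> bool" where
  "strongly_connected E \<longleftrightarrow> (\<forall>i j. (i, j) \<in> E\<^sup>*)"

definition diag :: "('n::finite \<Rightarrow> real) \<Rightarrow> real^'n^'n" where
  "diag d = (\<chi> i j. if i = j then d i else 0)"

definition cmat :: "real^'n^'n \<Rightarrow> complex^'n^'n" where
  "cmat A = (\<chi> i j. complex_of_real (A $ i $ j))"

definition eigenvalues_c :: "real^'n::finite^'n \<Rightarrow> complex set" where
  "eigenvalues_c A = {z. det (cmat A - mat z) = 0}"

definition spectral_abscissa :: "real^'n::finite^'n \<Rightarrow> real" where
  "spectral_abscissa A = Max (Re ` eigenvalues_c A)"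

definition depends_on :: "(real^'n \<Rightarrow> real) \<Rightarrow> 'n \<Rightarrow> bool" where
  "depends_on f j \<longleftrightarrow> (\<exists>x y. (\<forall>k. k \<noteq> j \<longrightarrow> x $ k = y $ k) \<and> f x \<noteq> f y)"

definition strict_incr_in :: "(real^'n \<Rightarrow> real) \<Rightarrow> 'n \<Rightarrow> bool" where
  "strict_incr_in f j \<longleftrightarrow>
     (\<forall>x y. (\<forall>k. k \<noteq> j \<longrightarrow> x $ k = y $ k) \<and> x $ j < y $ j \<longrightarrow> f x < f y)"

definition C2 :: "(real^'n::finite \<Rightarrow> real) \<Rightarrow> bool" where
  "C2 f \<longleftrightarrow> (\<exists>(g :: real^'n \<Rightarrow> real^'n) (H :: real^'n \<Rightarrow> real^'n^'n).
      (\<forall>x. (f has_derivative (\<lambda>h. g x \<bullet> h)) (at x)) \<and>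
      (\<forall>x. (g has_derivative (\<lambda>h. H x *v h)) (at x)) \<and>
      continuous_on UNIV H)"

definition jacobian0 :: "('n::finite \<Rightarrow> real^'n \<Rightarrow> real) \<Rightarrow> real^'n^'n" where
  "jacobian0 f = matrix (frechet_derivative (\<lambda>x. \<chi> i. f i x) (at 0))"

end

theory Submission
  imports Defs "HOL-Computational_Algebra.Fundamental_Theorem_Algebra"
begin

text \<open>Since the Jacobian of \<open>f\<close> at 0 is nonnegative and irreducible along \<open>E_R\<close>, the matrix
  \<open>Q\<^sub>2\<close> is an irreducible Metzler matrix; its spectral abscissa \<open>s > 0\<close> therefore has a positive
  subinvariant vector \<open>u\<close>, \<open>Q\<^sub>2 u \<ge> s u\<close>. Solutions stay in \<open>\<Omega>\<close>, \<open>R\<close> stays positive, and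
  \<open>R\<^sub>i + T\<^sub>i\<close> is eventually at least \<open>\<delta>\<^sub>i / (\<theta>\<^sub>i + \<delta>\<^sub>i) - \<nu>\<close>. Linearising \<open>f\<close> at 0 then shows that,
  for small \<open>\<eta>\<close>, the vector field points into \<open>{R \<ge> \<eta> u}\<close> wherever \<open>R\<close> touches its boundary, so
  \<open>R(t) > \<eta> u\<close> for all large \<open>t\<close>.\<close>

section \<open>Analytic tools\<close>

lemma barrier_positive:
  fixes h :: "'k \<Rightarrow> real \<Rightarrow> real"
  assumes "finite K" and "a \<le> b"
    and cont: "\<And>k. k \<in> K \<Longrightarrow> continuous_on {a..b} (h k)"
    and init: "\<And>k. k \<in> K \<Longrightarrow> h k a > 0"
    and exit: "\<And>k t. k \<in> K \<Longrightarrow> a < t \<Longrightarrow> t \<le> b \<Longrightarrow> \<forall>j\<in>K. h j t \<ge> 0 \<Longrightarrow> h k t = 0 \<Longrightarrow>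
        \<exists>D>0. (h k has_real_derivative D) (at t)"
    and "k \<in> K" "t \<in> {a..b}"
  shows "h k t > 0"
proof (rule ccontr)
  assume "\<not> h k t > 0"
  define S where "S = (\<Union>j\<in>K. {a..b} \<inter> h j -` {..0})"
  have "closed S"
    unfolding S_def using \<open>finite K\<close> cont
    by (intro closed_UN ballI continuous_closed_preimage) auto
  moreover have "t \<in> S"
    using \<open>\<not> h k t > 0\<close> \<open>k \<in> K\<close> \<open>t \<in> {a..b}\<close> unfolding S_def by force
  moreover have "bdd_below S"
    by (auto simp: S_def intro!: bdd_belowI[of _ a])
  ultimately have "Inf S \<in> S"
    using closed_contains_Inf by blast
  define t' where "t' = Inf S"
  then obtain k' where k': "k' \<in> K" "t' \<in> {a..b}" "h k' t' \<le> 0"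
    using \<open>Inf S \<in> S\<close> by (auto simp: S_def)
  have before: "h j s > 0" if "j \<in> K" "a \<le> s" "s < t'" for j s
  proof (rule ccontr)
    assume "\<not> h j s > 0"
    then have "s \<in> {a..b} \<inter> h j -` {..0}" using that k'(2) by auto
    then have "s \<in> S" using \<open>j \<in> K\<close> unfolding S_def by blast
    then have "t' \<le> s" unfolding t'_def using \<open>bdd_below S\<close> by (rule cInf_lower)
    then show False using that by simp
  qed
  have "a < t'"
    using init[OF k'(1)] k' by (cases "a = t'") auto
  have at_exit: "h j t' \<ge> 0" if j: "j \<in> K" for j
  proof (rule ccontr)
    assume "\<not> h j t' \<ge> 0"
    moreover have "continuous_on {a..t'} (h j)"
      using cont[OF j] by (rule continuous_on_subset) (use k'(2) in auto)
    ultimately obtain s where "a \<le> s" "s \<le> t'" "h j s = 0"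
      using IVT2'[of "h j" t' 0 a] init[OF j] \<open>a < t'\<close> by auto
    then show False
      using before[OF j, of s] \<open>\<not> h j t' \<ge> 0\<close> by (cases "s = t'") auto
  qed
  obtain D where "D > 0" "(h k' has_real_derivative D) (at t')"
    using exit[OF k'(1) \<open>a < t'\<close>] k' at_exit by force
  then obtain d where "d > 0" and decr: "\<And>e. e > 0 \<Longrightarrow> e < d \<Longrightarrow> h k' (t' - e) < h k' t'"
    using DERIV_pos_inc_left by blast
  define e where "e = min d (t' - a) / 2"
  have "0 < e" "e < d" "a < t' - e"
    using \<open>d > 0\<close> \<open>a < t'\<close> by (auto simp: e_def min_def field_simps)
  then have "h k' (t' - e) < 0"
    using decr k'(3) by force
  moreover have "h k' (t' - e) > 0"
    using before[OF k'(1)] \<open>0 < e\<close> \<open>a < t' - e\<close> by simp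
  ultimately show False by simp
qed

text \<open>Perturbing by \<open>\<epsilon> e\<^sup>L\<^sup>t\<close> with \<open>L > M\<close> turns the inward condition into a strictly positive
  derivative at the first exit time, so the barrier argument applies; then \<open>\<epsilon> \<rightarrow> 0\<close>.\<close>
lemma nonneg_invariance:
  fixes y :: "'k \<Rightarrow> real \<Rightarrow> real"
  assumes "finite K" "0 < \<eta>\<^sub>0"
    and cont: "\<And>k. k \<in> K \<Longrightarrow> continuous_on {0..b} (y k)"
    and init: "\<And>k. k \<in> K \<Longrightarrow> y k 0 \<ge> 0"
    and inward: "\<And>k t \<eta>. k \<in> K \<Longrightarrow> 0 < t \<Longrightarrow> t \<le> b \<Longrightarrow> 0 < \<eta> \<Longrightarrow> \<eta> \<le> \<eta>\<^sub>0 \<Longrightarrow>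
        \<forall>j\<in>K. y j t \<ge> -\<eta> \<Longrightarrow> y k t = -\<eta> \<Longrightarrow>
        \<exists>D. (y k has_real_derivative D) (at t) \<and> D \<ge> - M * \<eta>"
    and "k \<in> K" "t \<in> {0..b}"
  shows "y k t \<ge> 0"
proof -
  define L where "L = \<bar>M\<bar> + 1"
  have perturbed: "y k t + \<epsilon> * exp (L * t) > 0" if eps: "0 < \<epsilon>" "\<epsilon> * exp (L * b) \<le> \<eta>\<^sub>0" for \<epsilon>
  proof (rule barrier_positive[where h = "\<lambda>k t. y k t + \<epsilon> * exp (L * t)", OF \<open>finite K\<close>])
    show "0 \<le> b" using \<open>t \<in> {0..b}\<close> by simp
    show "continuous_on {0..b} (\<lambda>t. y j t + \<epsilon> * exp (L * t))" if "j \<in> K" for j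
      using cont[OF that] by (intro continuous_intros)
    show "y j 0 + \<epsilon> * exp (L * 0) > 0" if "j \<in> K" for j
      using init[OF that] \<open>0 < \<epsilon>\<close> by simp
  next
    fix j s assume "j \<in> K" "0 < s" "s \<le> b"
      and nonneg: "\<forall>i\<in>K. y i s + \<epsilon> * exp (L * s) \<ge> 0" and zero: "y j s + \<epsilon> * exp (L * s) = 0"
    define \<eta> where "\<eta> = \<epsilon> * exp (L * s)"
    have "\<eta> \<le> \<epsilon> * exp (L * b)"
      using \<open>s \<le> b\<close> \<open>0 < \<epsilon>\<close> by (simp add: \<eta>_def L_def add_nonneg_pos)
    moreover have "0 < \<eta>" using \<open>0 < \<epsilon>\<close> by (simp add: \<eta>_def)
    ultimately obtain D where D: "(y j has_real_derivative D) (at s)" "D \<ge> - M * \<eta>"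
      using inward[OF \<open>j \<in> K\<close> \<open>0 < s\<close> \<open>s \<le> b\<close>, of \<eta>] nonneg zero eps(2)
      by (force simp: \<eta>_def)
    have "((\<lambda>t. y j t + \<epsilon> * exp (L * t)) has_real_derivative D + L * \<eta>) (at s)"
      unfolding \<eta>_def by (auto intro!: derivative_eq_intros D(1))
    moreover have "M * \<eta> \<le> \<bar>M\<bar> * \<eta>"
      using \<open>0 < \<eta>\<close> by (intro mult_right_mono) auto
    then have "D + L * \<eta> > 0"
      using D(2) \<open>0 < \<eta>\<close> unfolding L_def distrib_right by linarith
    ultimately show "\<exists>D>0. ((\<lambda>t. y j t + \<epsilon> * exp (L * t)) has_real_derivative D) (at s)"
      by blast
  qed (use assms in auto)
  show ?thesis
  proof (rule ccontr)
    assume "\<not> y k t \<ge> 0"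
    define \<epsilon> where "\<epsilon> = min \<eta>\<^sub>0 (- y k t / 2) / exp (L * b)"
    have "0 < \<epsilon>" "\<epsilon> * exp (L * b) \<le> \<eta>\<^sub>0"
      using \<open>\<not> y k t \<ge> 0\<close> \<open>0 < \<eta>\<^sub>0\<close> by (auto simp: \<epsilon>_def)
    moreover have "\<epsilon> * exp (L * t) \<le> - y k t / 2"
    proof -
      have "exp (L * t) \<le> exp (L * b)"
        using \<open>t \<in> {0..b}\<close> by (simp add: L_def add_nonneg_pos)
      then have "\<epsilon> * exp (L * t) \<le> \<epsilon> * exp (L * b)"
        using \<open>0 < \<epsilon>\<close> by simp
      also have "\<dots> \<le> - y k t / 2"
        by (simp add: \<epsilon>_def)
      finally show ?thesis .
    qed
    ultimately show False
      using perturbed[of \<epsilon>] \<open>\<not> y k t \<ge> 0\<close> by linarith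
  qed
qed

lemma exp_lower_bound_of_deriv_ge:
  fixes y :: "real \<Rightarrow> real"
  assumes "a \<le> b" "continuous_on {a..b} y"
    and deriv: "\<And>t. a < t \<Longrightarrow> t < b \<Longrightarrow> \<exists>D. (y has_real_derivative D) (at t) \<and> D \<ge> - c * y t"
  shows "y b \<ge> exp (- c * (b - a)) * y a"
proof -
  have "exp (c * (a - a)) * y a \<le> exp (c * (b - a)) * y b"
  proof (rule DERIV_nonneg_imp_increasing_open[OF \<open>a \<le> b\<close>])
    fix t assume "a < t" "t < b"
    then obtain D where D: "(y has_real_derivative D) (at t)" "D \<ge> - c * y t"
      using deriv by blast
    then have "((\<lambda>t. exp (c * (t - a)) * y t) has_real_derivative exp (c * (t - a)) * (c * y t + D)) (at t)"
      by (auto intro!: derivative_eq_intros simp: algebra_simps)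
    moreover have "0 \<le> exp (c * (t - a)) * (c * y t + D)"
      using D(2) by simp
    ultimately show "\<exists>D'. ((\<lambda>t. exp (c * (t - a)) * y t) has_real_derivative D') (at t) \<and> 0 \<le> D'"
      by blast
  qed (use assms in \<open>auto intro!: continuous_intros\<close>)
  then have "exp (- c * (b - a)) * y a \<le> exp (- c * (b - a)) * (exp (c * (b - a)) * y b)"
    by (intro mult_left_mono) auto
  then show ?thesis
    by (simp add: mult.assoc[symmetric] flip: exp_add)
qed

lemma eventually_at_right_0_exists:
  assumes "\<forall>\<^sub>F x in at_right (0::real). P x"
  shows "\<exists>x>0. P x"
  using eventually_happens'[OF trivial_limit_at_right_real eventually_conj[OF eventually_at_right_less assms]]
  by blast

lemma has_real_derivative_vec_nth:
  fixes X :: "real \<Rightarrow> real^'n"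
  assumes "(X has_vector_derivative V) (at t within {0..})" "0 < t"
  shows "((\<lambda>s. X s $ i) has_real_derivative V $ i) (at t)"
proof -
  have "at t within {0..} = at t"
    using \<open>0 < t\<close> by (intro at_within_interior) auto
  then have "((\<lambda>s. X s $ i) has_vector_derivative V $ i) (at t)"
    using bounded_linear.has_vector_derivative[OF bounded_linear_vec_nth assms(1)] by simp
  then show ?thesis
    by (simp add: has_real_derivative_iff_has_vector_derivative)
qed

lemma continuous_on_if_has_vector_derivative:
  assumes "\<And>t. t \<in> S \<Longrightarrow> (X has_vector_derivative V t) (at t within S)"
  shows "continuous_on S X"
  unfolding continuous_on_eq_continuous_within
  using assms has_vector_derivative_continuous by blast

lemma bounded_on_Icc:
  fixes F :: "'k \<Rightarrow> real \<Rightarrow> real"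
  assumes "finite I" "\<And>k. k \<in> I \<Longrightarrow> continuous_on {a..b} (F k)"
  shows "\<exists>B\<ge>0. \<forall>k\<in>I. \<forall>s\<in>{a..b}. \<bar>F k s\<bar> \<le> B"
  using assms
proof (induction I rule: finite_induct)
  case (insert k I)
  obtain B where "B \<ge> 0" "\<forall>j\<in>I. \<forall>s\<in>{a..b}. \<bar>F j s\<bar> \<le> B"
    using insert by blast
  moreover obtain C where "\<forall>s\<in>{a..b}. \<bar>F k s\<bar> \<le> C"
    using compact_imp_bounded[OF compact_continuous_image[OF insert.prems[of k] compact_Icc]]
    by (auto simp: bounded_real)
  ultimately show ?case
    by (intro exI[of _ "max B C"]) fastforce
qed auto

lemma mult_ge_neg_of_near_nonneg:
  fixes a b B \<eta> :: real
  assumes "a \<ge> - \<eta>" "b \<ge> - (B * \<eta>)" "\<bar>a\<bar> \<le> B" "\<bar>b\<bar> \<le> B" "0 \<le> \<eta>"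
  shows "a * b \<ge> - (B * (1 + B) * \<eta>)"
proof -
  have "0 \<le> B" using assms(3) by linarith
  then have "0 \<le> B * \<eta>" "0 \<le> B * (1 + B) * \<eta>" using assms(5) by simp_all
  consider "a \<ge> 0" "b \<ge> 0" | "a \<ge> 0" "b < 0" | "a < 0" "b \<ge> 0" | "a < 0" "b < 0"
    by linarith
  then show ?thesis
  proof cases
    case 2
    then have "a * b \<ge> a * (- (B * \<eta>))" using assms(2) by (intro mult_left_mono) auto
    moreover have "a * (B * \<eta>) \<le> B * (B * \<eta>)" using 2 assms \<open>0 \<le> B\<close> by (intro mult_right_mono) auto
    ultimately show ?thesis using \<open>0 \<le> B * \<eta>\<close> by (simp add: algebra_simps)
  next
    case 3
    then have "a * b \<ge> (- \<eta>) * b" using assms(1) by (intro mult_right_mono) auto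
    moreover have "\<eta> * b \<le> \<eta> * B" using 3 assms by (intro mult_left_mono) auto
    ultimately show ?thesis
      using mult_nonneg_nonneg[OF \<open>0 \<le> B\<close> \<open>0 \<le> B * \<eta>\<close>] by (simp add: algebra_simps)
  next
    case 1
    then show ?thesis using \<open>0 \<le> B * (1 + B) * \<eta>\<close> by (smt (verit) mult_nonneg_nonneg)
  next
    case 4
    then show ?thesis using \<open>0 \<le> B * (1 + B) * \<eta>\<close> by (smt (verit) mult_nonpos_nonpos)
  qed
qed

section \<open>Monotone and concave functions\<close>

lemma le_if_le_in_coordinate:
  assumes "depends_on F j \<Longrightarrow> strict_incr_in F j"
    and "\<forall>k. k \<noteq> j \<longrightarrow> x $ k = y $ k" "x $ j \<le> y $ j"
  shows "F x \<le> F y"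
proof (cases "x $ j = y $ j")
  case True
  then have "x = y"
    using assms(2) by (metis vec_eq_iff)
  then show ?thesis by simp
next
  case False
  then have "x $ j < y $ j" using assms(3) by simp
  then show ?thesis
    using assms(1,2) unfolding strict_incr_in_def depends_on_def by (metis less_imp_le order_refl)
qed

lemma le_if_le_coordinatewise:
  fixes F :: "real^'n \<Rightarrow> real"
  assumes "\<And>j. depends_on F j \<Longrightarrow> strict_incr_in F j" and "\<And>k. x $ k \<le> y $ k"
  shows "F x \<le> F y"
proof -
  define z where "z S = (\<chi> k. if k \<in> S then y $ k else x $ k)" for S
  have "F x \<le> F (z S)" if "finite S" for S
    using that
  proof (induction S rule: finite_induct)
    case empty
    then show ?case by (simp add: z_def)
  next
    case (insert j S)
    have "F (z S) \<le> F (z (insert j S))"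
      by (rule le_if_le_in_coordinate[OF assms(1)]) (use assms(2) insert in \<open>auto simp: z_def\<close>)
    then show ?case using insert by simp
  qed
  moreover have "z UNIV = y" by (simp add: z_def)
  ultimately show ?thesis by (metis finite_class.finite_UNIV)
qed

lemma concave_on_UNIV_continuous:
  fixes F :: "'a::euclidean_space \<Rightarrow> real"
  assumes "concave_on UNIV F"
  shows "continuous_on UNIV F"
  using convex_on_continuous[of UNIV "\<lambda>x. - F x"] continuous_on_minus[of UNIV "\<lambda>x. - F x"] assms
  by (simp add: concave_on_def)

lemma concave_on_scaleR_ge:
  assumes "concave_on UNIV F" "F 0 = 0" "0 \<le> t" "t \<le> 1"
  shows "t * F y \<le> F (t *\<^sub>R y)"
  using concave_onD[OF assms(1) assms(3,4), of 0 y] assms(2) by simp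

lemma concave_mono_lower_bound:
  fixes F :: "real^'n \<Rightarrow> real"
  assumes "concave_on UNIV F" "F 0 = 0" and mono: "\<And>x y. (\<And>k. x $ k \<le> y $ k) \<Longrightarrow> F x \<le> F y"
    and "0 \<le> \<eta>" "\<eta> \<le> 1" "\<And>k. x $ k \<ge> - \<eta>"
  shows "\<eta> * F (- 1) \<le> F x"
proof -
  have "\<eta> * F (- 1) \<le> F (\<eta> *\<^sub>R (- 1))"
    using concave_on_scaleR_ge[OF assms(1,2,4,5)] .
  also have "\<dots> \<le> F x"
    using assms(6) by (intro mono) simp
  finally show ?thesis .
qed

lemma tendsto_directional_quotient:
  fixes F :: "real^'n \<Rightarrow> real"
  assumes "(F has_derivative (\<lambda>h. G \<bullet> h)) (at 0)" "F 0 = 0"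
  shows "((\<lambda>t. F (t *\<^sub>R y) / t) \<longlongrightarrow> G \<bullet> y) (at 0)"
proof -
  have "((\<lambda>t. t *\<^sub>R y) has_derivative (\<lambda>h. h *\<^sub>R y)) (at 0)"
    by (intro derivative_eq_intros) auto
  moreover have "(F has_derivative (\<lambda>h. G \<bullet> h)) (at (0 *\<^sub>R y))"
    using assms(1) by simp
  ultimately have "((\<lambda>t. F (t *\<^sub>R y)) has_derivative (\<lambda>h. G \<bullet> (h *\<^sub>R y))) (at 0)"
    by (rule has_derivative_compose)
  moreover have "(\<lambda>h. G \<bullet> (h *\<^sub>R y)) = (*) (G \<bullet> y)"
    by (auto simp: fun_eq_iff)
  ultimately have "((\<lambda>t. F (t *\<^sub>R y)) has_real_derivative G \<bullet> y) (at 0)"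
    by (simp add: has_field_derivative_def)
  then show ?thesis
    using assms(2) by (simp add: DERIV_def)
qed

lemma concave_le_gradient:
  fixes F :: "real^'n \<Rightarrow> real"
  assumes "concave_on UNIV F" "F 0 = 0" "(F has_derivative (\<lambda>h. G \<bullet> h)) (at 0)"
  shows "F y \<le> G \<bullet> y"
proof (rule tendsto_lowerbound)
  show "((\<lambda>t. F (t *\<^sub>R y) / t) \<longlongrightarrow> G \<bullet> y) (at_right 0)"
    using tendsto_directional_quotient[OF assms(3,2)] by (rule filterlim_mono) (simp_all add: at_le)
  show "\<forall>\<^sub>F t in at_right 0. F y \<le> F (t *\<^sub>R y) / t"
    unfolding eventually_at_right_field
    using concave_on_scaleR_ge[OF assms(1,2)]
    by (intro exI[of _ 1]) (auto simp: pos_le_divide_eq mult.commute)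
qed (simp add: trivial_limit_at_right_real)

lemma concave_gradient_nth_ge:
  fixes F :: "real^'n \<Rightarrow> real"
  assumes "concave_on UNIV F" "F 0 = 0" "(F has_derivative (\<lambda>h. G \<bullet> h)) (at 0)"
  shows "F (axis j 1) \<le> G $ j"
  using concave_le_gradient[OF assms, of "axis j 1"] by (simp add: inner_axis)

lemma concave_mono_gradient_nth_nonneg:
  fixes F :: "real^'n \<Rightarrow> real"
  assumes "concave_on UNIV F" "F 0 = 0" "(F has_derivative (\<lambda>h. G \<bullet> h)) (at 0)"
    and mono: "\<And>x y. (\<And>k. x $ k \<le> y $ k) \<Longrightarrow> F x \<le> F y"
  shows "0 \<le> G $ j"
proof -
  have "F 0 \<le> F (axis j 1)"
    by (rule mono) (simp add: axis_def)
  then show ?thesis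
    using concave_gradient_nth_ge[OF assms(1-3), of j] assms(2) by simp
qed

lemma concave_strict_incr_gradient_nth_pos:
  fixes F :: "real^'n \<Rightarrow> real"
  assumes "concave_on UNIV F" "F 0 = 0" "(F has_derivative (\<lambda>h. G \<bullet> h)) (at 0)"
    and "strict_incr_in F j"
  shows "0 < G $ j"
proof -
  have "F 0 < F (axis j 1)"
    using assms(4) unfolding strict_incr_in_def by (auto simp: axis_def)
  then show ?thesis
    using concave_gradient_nth_ge[OF assms(1-3), of j] assms(2) by simp
qed

lemma jacobian0_nth:
  fixes f :: "'n::finite \<Rightarrow> real^'n \<Rightarrow> real"
  assumes "\<And>i. (f i has_derivative (\<lambda>h. G i \<bullet> h)) (at 0)"
  shows "jacobian0 f $ i $ j = G i $ j"
proof -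
  have "((\<lambda>x. \<chi> i. f i x) has_derivative (\<lambda>h. \<chi> i. G i \<bullet> h)) (at 0)"
    using assms by (subst has_derivative_componentwise_within) (auto simp: Basis_vec_def inner_axis)
  then have "frechet_derivative (\<lambda>x. \<chi> i. f i x) (at 0) = (\<lambda>h. \<chi> i. G i \<bullet> h)"
    by (simp add: frechet_derivative_at[symmetric])
  then show ?thesis
    unfolding jacobian0_def matrix_def by (simp add: inner_axis)
qed

section \<open>Spectral abscissa of Metzler matrices\<close>

lemma det_eq_0_imp_kernel:
  fixes B :: "'a::field^'n::finite^'n"
  assumes "det B = 0"
  shows "\<exists>v. v \<noteq> 0 \<and> B *v v = 0"
  using assms invertible_det_nz[of B] matrix_left_invertible_ker[of B] invertible_left_inverse[of B]
  by auto

text \<open>The Leibniz expansion of \<open>det (cmat A - mat z)\<close>, with every entry read as a polynomial in \<open>z\<close>.\<close>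

definition char_poly_entry :: "real^'n^'n \<Rightarrow> 'n \<Rightarrow> 'n \<Rightarrow> complex poly" where
  "char_poly_entry A i j = [:complex_of_real (A $ i $ j), - (if i = j then 1 else 0):]"

definition char_poly_c :: "real^'n::finite^'n \<Rightarrow> complex poly" where
  "char_poly_c A =
     (\<Sum>p | p permutes (UNIV::'n set). of_int (sign p) * (\<Prod>i\<in>UNIV. char_poly_entry A i (p i)))"

lemma poly_char_poly_c: "poly (char_poly_c A) z = det (cmat A - mat z)"
  unfolding char_poly_c_def det_def
  by (simp add: poly_sum poly_prod char_poly_entry_def cmat_def mat_def of_int_poly)
     (intro sum.cong refl arg_cong2[where f = "(*)"] prod.cong, auto)

lemma coeff_char_poly_c: "coeff (char_poly_c (A::real^'n::finite^'n)) CARD('n) = (-1) ^ CARD('n)"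
proof -
  let ?n = "CARD('n)" and ?P = "\<lambda>p. \<Prod>i\<in>UNIV. char_poly_entry A i (p i)"
  have "coeff (?P p) ?n = 0" if "p \<noteq> id" for p
  proof -
    obtain i0 where "p i0 \<noteq> i0" using \<open>p \<noteq> id\<close> by (auto simp: fun_eq_iff)
    have "degree (?P p) \<le> (\<Sum>i\<in>UNIV. degree (char_poly_entry A i (p i)))"
      using degree_prod_sum_le[of UNIV "\<lambda>i. char_poly_entry A i (p i)"] by (simp add: o_def)
    also have "\<dots> < (\<Sum>i\<in>(UNIV::'n set). 1)"
    proof (rule sum_strict_mono_ex1)
      show "\<forall>i\<in>UNIV. degree (char_poly_entry A i (p i)) \<le> 1"
        by (simp add: char_poly_entry_def)
      show "\<exists>i\<in>UNIV. degree (char_poly_entry A i (p i)) < 1"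
        using \<open>p i0 \<noteq> i0\<close> by (auto simp: char_poly_entry_def) (metis \<open>p i0 \<noteq> i0\<close>)
    qed simp
    finally show ?thesis by (simp add: coeff_eq_0)
  qed
  then have "coeff (char_poly_c A) ?n = of_int (sign (id::'n \<Rightarrow> 'n)) * coeff (?P id) ?n"
    unfolding char_poly_c_def coeff_sum of_int_poly coeff_smult[symmetric]
    by (subst sum.remove[of _ id]) (auto simp: finite_permutations permutes_id intro!: sum.neutral)
  moreover have "degree (?P id) = ?n"
    by (subst degree_prod_eq_sum_degree) (auto simp: char_poly_entry_def)
  moreover have "lead_coeff (?P id) = (\<Prod>i\<in>(UNIV::'n set). -1)"
    by (simp add: lead_coeff_prod char_poly_entry_def)
  ultimately show ?thesis by (simp add: sign_id)
qed

lemma spectral_abscissa_eigenvector: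
  fixes A :: "real^'n::finite^'n"
  shows "\<exists>z v. v \<noteq> 0 \<and> (cmat A - mat z) *v v = 0 \<and> Re z = spectral_abscissa A"
proof -
  have "coeff (char_poly_c A) CARD('n) \<noteq> 0"
    by (simp add: coeff_char_poly_c)
  then have "char_poly_c A \<noteq> 0" "degree (char_poly_c A) \<noteq> 0"
    using less_le_trans[OF zero_less_card_finite le_degree] by auto
  then obtain z0 where "poly (char_poly_c A) z0 = 0"
    using fundamental_theorem_of_algebra[of "char_poly_c A"] by (auto simp: constant_degree)
  then have "eigenvalues_c A \<noteq> {}"
    by (auto simp: eigenvalues_c_def poly_char_poly_c)
  moreover have "finite (eigenvalues_c A)"
    using poly_roots_finite[OF \<open>char_poly_c A \<noteq> 0\<close>] by (simp add: eigenvalues_c_def poly_char_poly_c)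
  ultimately have "spectral_abscissa A \<in> Re ` eigenvalues_c A"
    unfolding spectral_abscissa_def by (intro Max_in) auto
  then obtain z where "z \<in> eigenvalues_c A" "Re z = spectral_abscissa A" by auto
  then show ?thesis
    using det_eq_0_imp_kernel[of "cmat A - mat z"] by (auto simp: eigenvalues_c_def)
qed

lemma matrix_vector_mult_diag_split:
  fixes Q :: "'a::comm_ring_1^'n::finite^'n"
  shows "(Q *v x) $ i = Q $ i $ i * x $ i + (\<Sum>j\<in>UNIV - {i}. Q $ i $ j * x $ j)"
  unfolding matrix_vector_mult_def by (simp add: sum.remove[of UNIV i])

lemma Metzler_eigenvector_norm_subinvariant:
  fixes Q :: "real^'n::finite^'n"
  assumes offdiag: "\<And>i j. i \<noteq> j \<Longrightarrow> Q $ i $ j \<ge> 0"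
    and eigen: "(cmat Q - mat z) *v v = 0"
  shows "Re z * cmod (v $ i) \<le> (Q *v (\<chi> i. cmod (v $ i))) $ i"
proof -
  have "(cmat Q *v v) $ i - (mat z *v v) $ i = 0"
    using arg_cong[OF eigen, of "\<lambda>w. w $ i"] by (simp add: matrix_vector_mult_diff_rdistrib)
  then have "(cmat Q *v v) $ i = z * v $ i"
    by (simp add: matrix_vector_mult_def mat_def if_distrib[of "\<lambda>a. a * _"] cong: if_cong)
  then have "(z - of_real (Q $ i $ i)) * v $ i = (\<Sum>j\<in>UNIV - {i}. of_real (Q $ i $ j) * v $ j)"
    using matrix_vector_mult_diag_split[of "cmat Q" v i] by (simp add: cmat_def algebra_simps)
  then have "cmod ((z - of_real (Q $ i $ i)) * v $ i) \<le> (\<Sum>j\<in>UNIV - {i}. Q $ i $ j * cmod (v $ j))"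
    using norm_sum[of "\<lambda>j. of_real (Q $ i $ j) * v $ j" "UNIV - {i}"] offdiag
    by (simp add: norm_mult)
  moreover have "(Re z - Q $ i $ i) * cmod (v $ i) \<le> cmod ((z - of_real (Q $ i $ i)) * v $ i)"
    using complex_Re_le_cmod[of "z - of_real (Q $ i $ i)"] by (simp add: norm_mult mult_right_mono)
  ultimately show ?thesis
    using matrix_vector_mult_diag_split[of Q "\<chi> i. cmod (v $ i)" i] by (simp add: algebra_simps)
qed

lemma iterates_positive_if_spreading:
  fixes F :: "real^'n::finite \<Rightarrow> real^'n" and E :: "('n \<times> 'n) set"
  assumes diag: "\<And>x i. \<forall>j. 0 \<le> x $ j \<Longrightarrow> x $ i \<le> F x $ i"
    and spread: "\<And>x i j. \<forall>j. 0 \<le> x $ j \<Longrightarrow> (i, j) \<in> E \<Longrightarrow> 0 < x $ j \<Longrightarrow> 0 < F x $ i"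
    and "strongly_connected E" and w: "\<forall>j. 0 \<le> w $ j" "w \<noteq> 0"
  shows "\<exists>k. \<forall>i. 0 < (F ^^ k) w $ i"
proof -
  define it where "it k = (F ^^ k) w" for k
  have it_Suc: "it (Suc k) = F (it k)" for k
    by (simp add: it_def)
  have it_nonneg: "\<forall>j. 0 \<le> it k $ j" for k
  proof (induction k)
    case (Suc k)
    have "it k $ j \<le> it (Suc k) $ j" for j
      using diag[OF Suc] by (simp add: it_Suc)
    then show ?case
      using Suc by (meson order_trans)
  qed (use w in \<open>simp add: it_def\<close>)
  have stays_pos: "0 < it (m + d) $ i" if "0 < it m $ i" for m d i
  proof (induction d)
    case (Suc d)
    then show ?case
      using diag[OF it_nonneg, of "m + d" i] by (simp add: it_Suc)
  qed (use that in simp)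
  obtain j0 where "0 < w $ j0"
    using w by (metis vec_eq_iff zero_index order_le_less)
  have reaches: "\<exists>k. 0 < it k $ i" if "(i, j0) \<in> E\<^sup>*" for i
    using that
  proof (induction rule: converse_rtrancl_induct)
    case base
    then show ?case using \<open>0 < w $ j0\<close> by (intro exI[of _ 0]) (simp add: it_def)
  next
    case (step i j)
    then obtain k where "0 < it k $ j" by blast
    then have "0 < it (Suc k) $ i"
      using spread[OF it_nonneg step(1)] by (simp add: it_Suc)
    then show ?case by blast
  qed
  have "\<forall>i. \<exists>k. 0 < it k $ i"
    using reaches \<open>strongly_connected E\<close> unfolding strongly_connected_def by blast
  then obtain kf where kf: "\<And>i. 0 < it (kf i) $ i"
    by metis
  have "0 < it (\<Sum>i\<in>UNIV. kf i) $ i" for i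
  proof -
    obtain d where "(\<Sum>i\<in>UNIV. kf i) = kf i + d"
      using member_le_sum[of i UNIV kf] le_Suc_ex by auto
    then show ?thesis
      using stays_pos[OF kf[of i]] by simp
  qed
  then show ?thesis
    unfolding it_def by blast
qed

text \<open>Perron--Frobenius for irreducible Metzler matrices, in the weak form needed here: iterating
  \<open>Q + c I\<close>, which is nonnegative with diagonal at least 1 and commutes with \<open>Q\<close>, keeps a vector
  subinvariant and spreads its positivity along the edges of the strongly connected graph.\<close>

lemma irreducible_Metzler_positive_subinvariant:
  fixes Q :: "real^'n::finite^'n" and E :: "('n \<times> 'n) set"
  assumes offdiag: "\<And>i j. i \<noteq> j \<Longrightarrow> Q $ i $ j \<ge> 0"
    and edge: "\<And>i j. (i, j) \<in> E \<Longrightarrow> i \<noteq> j \<Longrightarrow> Q $ i $ j > 0"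
    and "strongly_connected E"
    and w: "\<And>i. w $ i \<ge> 0" "\<And>i. s * w $ i \<le> (Q *v w) $ i" "w \<noteq> 0"
  shows "\<exists>u. (\<forall>i. u $ i > 0) \<and> (\<forall>i. s * u $ i \<le> (Q *v u) $ i)"
proof -
  define c where "c = 1 + (\<Sum>k\<in>UNIV. \<bar>Q $ k $ k\<bar>)"
  have diag_c: "Q $ i $ i + c \<ge> 1" for i
    using member_le_sum[of i UNIV "\<lambda>k. \<bar>Q $ k $ k\<bar>"] unfolding c_def by auto
  define F where "F x = Q *v x + c *\<^sub>R x" for x :: "real^'n"
  have F_nth: "F x $ i = (Q $ i $ i + c) * x $ i + (\<Sum>j\<in>UNIV - {i}. Q $ i $ j * x $ j)" for x i
    unfolding F_def using matrix_vector_mult_diag_split[of Q x i] by (simp add: algebra_simps)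
  have offdiag_term_nonneg: "Q $ i $ j * x $ j \<ge> 0" if "\<forall>j. x $ j \<ge> 0" "j \<noteq> i" for x i j
    using offdiag[OF that(2)[symmetric]] that(1) by simp
  have diag_term_ge: "(Q $ i $ i + c) * x $ i \<ge> x $ i" if "x $ i \<ge> 0" for x i
    using mult_right_mono[OF diag_c that] by simp
  have F_diag: "x $ i \<le> F x $ i" if "\<forall>j. 0 \<le> x $ j" for x i
  proof -
    have "0 \<le> (\<Sum>j\<in>UNIV - {i}. Q $ i $ j * x $ j)"
      by (rule sum_nonneg) (use offdiag_term_nonneg[OF that] in auto)
    then show ?thesis
      unfolding F_nth using diag_term_ge[of x i] that by (meson add_increasing2 order_trans)
  qed
  have F_spread: "0 < F x $ i" if "\<forall>j. 0 \<le> x $ j" "(i, j) \<in> E" "0 < x $ j" for x i j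
  proof (cases "i = j")
    case False
    have "Q $ i $ j * x $ j \<le> (\<Sum>j\<in>UNIV - {i}. Q $ i $ j * x $ j)"
      by (rule member_le_sum) (use offdiag_term_nonneg[OF that(1)] False in auto)
    moreover have "0 < Q $ i $ j * x $ j"
      using edge[OF that(2) False] that(3) by simp
    ultimately show ?thesis
      unfolding F_nth using diag_term_ge[of x i] that(1) by (smt (verit))
  qed (use F_diag[OF that(1), of i] that(3) in simp)
  define P where "P x \<longleftrightarrow> (\<forall>i. x $ i \<ge> 0) \<and> (\<forall>i. s * x $ i \<le> (Q *v x) $ i)" for x
  have F_nonneg: "F y $ i \<ge> 0" if "\<forall>i. y $ i \<ge> 0" for y i
    using F_diag[OF that, of i] that by (meson order_trans)
  have P_F: "P (F x)" if "P x" for x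
  proof -
    have comm: "Q *v F x = F (Q *v x)"
      by (simp add: F_def matrix_vector_right_distrib matrix_vector_mult_scaleR)
    have lin: "F y - s *\<^sub>R F x = F (y - s *\<^sub>R x)" for y
      unfolding F_def by (simp add: algebra_simps)
    have "F (Q *v x - s *\<^sub>R x) $ i \<ge> 0" "F x $ i \<ge> 0" for i
      using that by (auto simp: P_def intro!: F_nonneg)
    moreover have "(Q *v F x) $ i - s * F x $ i = F (Q *v x - s *\<^sub>R x) $ i" for i
      by (simp add: comm flip: lin)
    ultimately have "s * F x $ i \<le> (Q *v F x) $ i" "F x $ i \<ge> 0" for i
      by (metis diff_ge_0_iff_ge)+
    then show ?thesis
      unfolding P_def by blast
  qed
  have "P ((F ^^ k) w)" for k
    by (induction k) (use w P_F in \<open>auto simp: P_def\<close>)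
  moreover have "\<exists>k. \<forall>i. 0 < (F ^^ k) w $ i"
  proof (rule iterates_positive_if_spreading[where E = E, OF _ _ \<open>strongly_connected E\<close>])
    show "x $ i \<le> F x $ i" if "\<forall>j. 0 \<le> x $ j" for x i
      using F_diag[OF that] .
    show "0 < F x $ i" if "\<forall>j. 0 \<le> x $ j" "(i, j) \<in> E" "0 < x $ j" for x i j
      using F_spread[OF that] .
    show "\<forall>j. 0 \<le> w $ j" "w \<noteq> 0"
      using w by auto
  qed
  ultimately show ?thesis
    unfolding P_def by blast
qed

lemma Metzler_positive_subinvariant:
  fixes Q :: "real^'n::finite^'n" and E :: "('n \<times> 'n) set"
  assumes offdiag: "\<And>i j. i \<noteq> j \<Longrightarrow> Q $ i $ j \<ge> 0"
    and edge: "\<And>i j. (i, j) \<in> E \<Longrightarrow> i \<noteq> j \<Longrightarrow> Q $ i $ j > 0"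
    and "strongly_connected E"
  shows "\<exists>u. (\<forall>i. u $ i > 0) \<and> (\<forall>i. spectral_abscissa Q * u $ i \<le> (Q *v u) $ i)"
proof -
  obtain z v where "v \<noteq> 0" and eigen: "(cmat Q - mat z) *v v = 0" and "Re z = spectral_abscissa Q"
    using spectral_abscissa_eigenvector by blast
  have "\<exists>u. (\<forall>i. u $ i > 0) \<and> (\<forall>i. Re z * u $ i \<le> (Q *v u) $ i)"
  proof (rule irreducible_Metzler_positive_subinvariant[OF offdiag edge \<open>strongly_connected E\<close>])
    show "(\<chi> i. cmod (v $ i)) \<noteq> 0"
      using \<open>v \<noteq> 0\<close> by (simp add: vec_eq_iff)
    show "Re z * (\<chi> i. cmod (v $ i)) $ i \<le> (Q *v (\<chi> i. cmod (v $ i))) $ i" for i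
      using Metzler_eigenvector_norm_subinvariant[OF offdiag eigen] by simp
    show "0 \<le> (\<chi> i. cmod (v $ i)) $ i" for i
      by simp
  qed
  then show ?thesis
    using \<open>Re z = spectral_abscissa Q\<close> by simp
qed

lemma Q2_positive_subinvariant:
  fixes J :: "real^'n::finite^'n" and E :: "('n \<times> 'n) set" and \<theta> \<delta> d :: "'n \<Rightarrow> real"
  assumes "\<And>i. \<theta> i > 0" "\<And>i. \<delta> i > 0"
    and J_nonneg: "\<And>i j. 0 \<le> J $ i $ j" and J_pos: "\<And>i j. (i, j) \<in> E \<Longrightarrow> 0 < J $ i $ j"
    and "strongly_connected E"
  defines "Q \<equiv> (J - diag \<theta>) - diag (\<lambda>i. \<theta> i / (\<theta> i + \<delta> i)) ** J - diag d"
  shows "\<exists>u. (\<forall>i. 0 < u $ i) \<and>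
    (\<forall>i. spectral_abscissa Q * u $ i \<le> \<delta> i / (\<theta> i + \<delta> i) * (J *v u) $ i - (\<theta> i + d i) * u $ i)"
proof -
  define a where "a i = \<delta> i / (\<theta> i + \<delta> i)" for i
  have "0 < a i" "J $ i $ j - \<theta> i / (\<theta> i + \<delta> i) * J $ i $ j = a i * J $ i $ j" for i j
    using assms(1,2)[of i] by (simp_all add: a_def field_simps)
  then have Q_nth: "Q $ i $ j = a i * J $ i $ j - (if i = j then \<theta> i + d i else 0)" for i j
    unfolding Q_def by (auto simp: diag_def matrix_matrix_mult_def if_distrib[of "\<lambda>x. x * _"] cong: if_cong)
  have "\<exists>u. (\<forall>i. 0 < u $ i) \<and> (\<forall>i. spectral_abscissa Q * u $ i \<le> (Q *v u) $ i)"
  proof (rule Metzler_positive_subinvariant[OF _ _ \<open>strongly_connected E\<close>])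
    show "0 \<le> Q $ i $ j" if "i \<noteq> j" for i j
      using that \<open>0 < a i\<close> J_nonneg[of i j] by (simp add: Q_nth)
    show "0 < Q $ i $ j" if "(i, j) \<in> E" "i \<noteq> j" for i j
      using that \<open>0 < a i\<close> J_pos[of i j] by (simp add: Q_nth)
  qed
  moreover have "(Q *v u) $ i = a i * (J *v u) $ i - (\<theta> i + d i) * u $ i" for u i
    by (simp add: matrix_vector_mult_def Q_nth left_diff_distrib sum_subtractf sum_distrib_left mult.assoc
        if_distrib[of "\<lambda>x. x * _"] cong: if_cong)
  ultimately show ?thesis
    by (simp add: a_def)
qed

section \<open>The SURQT model\<close>

locale surqt =
  fixes \<theta> \<delta> :: "'n::finite \<Rightarrow> real"
    and f g :: "'n \<Rightarrow> real^'n \<Rightarrow> real"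
    and R T :: "real \<Rightarrow> real^'n"
  assumes theta_pos: "\<And>i. \<theta> i > 0"
    and delta_pos: "\<And>i. \<delta> i > 0"
    and f_mono: "\<And>i x y. (\<And>k. x $ k \<le> y $ k) \<Longrightarrow> f i x \<le> f i y"
    and g_mono: "\<And>i x y. (\<And>k. x $ k \<le> y $ k) \<Longrightarrow> g i x \<le> g i y"
    and f_zero: "\<And>i. f i 0 = 0"
    and g_zero: "\<And>i. g i 0 = 0"
    and f_concave: "\<And>i. concave_on UNIV (f i)"
    and g_concave: "\<And>i. concave_on UNIV (g i)"
    and ode_R: "\<And>t. t \<ge> 0 \<Longrightarrow> (R has_vector_derivative
        (\<chi> i. T t $ i * f i (R t) - R t $ i * g i (T t) - \<theta> i * R t $ i)) (at t within {0..})"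
    and ode_T: "\<And>t. t \<ge> 0 \<Longrightarrow> (T has_vector_derivative
        (\<chi> i. R t $ i * g i (T t) - T t $ i * f i (R t) + \<delta> i * (1 - R t $ i - T t $ i))) (at t within {0..})"
    and init_Omega: "\<And>i. R 0 $ i \<ge> 0 \<and> T 0 $ i \<ge> 0 \<and> R 0 $ i + T 0 $ i \<le> 1"
begin

definition rate_R :: "real^'n \<Rightarrow> real^'n \<Rightarrow> 'n \<Rightarrow> real" where
  "rate_R x y i = y $ i * f i x - x $ i * g i y - \<theta> i * x $ i"

definition rate_T :: "real^'n \<Rightarrow> real^'n \<Rightarrow> 'n \<Rightarrow> real" where
  "rate_T x y i = x $ i * g i y - y $ i * f i x + \<delta> i * (1 - x $ i - y $ i)"

lemma R_deriv: "0 < t \<Longrightarrow> ((\<lambda>s. R s $ i) has_real_derivative rate_R (R t) (T t) i) (at t)"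
  using has_real_derivative_vec_nth[OF ode_R] by (simp add: rate_R_def)

lemma T_deriv: "0 < t \<Longrightarrow> ((\<lambda>s. T s $ i) has_real_derivative rate_T (R t) (T t) i) (at t)"
  using has_real_derivative_vec_nth[OF ode_T] by (simp add: rate_T_def)

lemma R_continuous: "continuous_on {0..} R"
  using ode_R by (intro continuous_on_if_has_vector_derivative) auto

lemma T_continuous: "continuous_on {0..} T"
  using ode_T by (intro continuous_on_if_has_vector_derivative) auto

lemma continuous_on_nth_Icc:
  assumes "continuous_on {0..} X"
  shows "continuous_on {0..b} (\<lambda>s. X s $ i)"
  by (rule continuous_on_subset[OF continuous_on_component[OF assms]]) auto

lemma rates_near_Omega:
  assumes "0 < \<eta>" "\<eta> \<le> 1"
    and near: "\<And>l. x $ l \<ge> - \<eta>" "\<And>l. y $ l \<ge> - \<eta>" "\<And>l. 1 - x $ l - y $ l \<ge> - \<eta>"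
    and bounds: "\<And>l. \<bar>x $ l\<bar> \<le> B" "\<And>l. \<bar>y $ l\<bar> \<le> B" "\<And>l. \<bar>f l x\<bar> \<le> B" "\<And>l. \<bar>g l y\<bar> \<le> B"
      "\<And>l. - f l (- 1) \<le> B" "\<And>l. - g l (- 1) \<le> B" "\<And>l. \<theta> l \<le> B" "\<And>l. \<delta> l \<le> B"
  shows "x $ i = - \<eta> \<Longrightarrow> rate_R x y i \<ge> - (B * (1 + B) + 2 * B) * \<eta>"
    and "y $ i = - \<eta> \<Longrightarrow> rate_T x y i \<ge> - (B * (1 + B) + 2 * B) * \<eta>"
    and "1 - x $ i - y $ i = - \<eta> \<Longrightarrow> - rate_R x y i - rate_T x y i \<ge> - (B * (1 + B) + 2 * B) * \<eta>"
proof -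
  have "0 \<le> B" using bounds(1)[of i] by linarith
  have f_low: "f i x \<ge> - (B * \<eta>)"
  proof -
    have "\<eta> * f i (- 1) \<le> f i x"
      using concave_mono_lower_bound[OF f_concave f_zero f_mono] assms(1,2) near(1) by simp
    moreover have "\<eta> * (- f i (- 1)) \<le> \<eta> * B"
      using bounds(5)[of i] assms(1) by (intro mult_left_mono) auto
    ultimately show ?thesis by (simp add: algebra_simps)
  qed
  have g_low: "g i y \<ge> - (B * \<eta>)"
  proof -
    have "\<eta> * g i (- 1) \<le> g i y"
      using concave_mono_lower_bound[OF g_concave g_zero g_mono] assms(1,2) near(2) by simp
    moreover have "\<eta> * (- g i (- 1)) \<le> \<eta> * B"
      using bounds(6)[of i] assms(1) by (intro mult_left_mono) auto
    ultimately show ?thesis by (simp add: algebra_simps)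
  qed
  have "\<eta> * (- g i y) \<le> \<eta> * B" "\<eta> * (- f i x) \<le> \<eta> * B"
    by (rule mult_left_mono; use bounds(3,4)[of i] assms(1) in \<open>simp add: abs_le_iff\<close>)+
  moreover have "\<theta> i * \<eta> \<le> B * \<eta>" "\<delta> i * \<eta> \<le> B * \<eta>"
    using bounds(7,8)[of i] assms(1) by (auto intro!: mult_right_mono)
  moreover have "0 \<le> B * \<eta>" "0 \<le> B * (B * \<eta>)" "0 \<le> \<theta> i * \<eta>" "0 \<le> \<delta> i * \<eta>"
    using \<open>0 \<le> B\<close> assms(1) theta_pos[of i] delta_pos[of i] by simp_all
  moreover have "1 - x $ i - y $ i = - \<eta> \<Longrightarrow> \<delta> i * (1 - x $ i - y $ i) = - (\<delta> i * \<eta>)"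
    by simp
  moreover have "\<delta> i * (1 - x $ i - y $ i) \<ge> - (\<delta> i * \<eta>)" "\<theta> i * x $ i \<ge> - (\<theta> i * \<eta>)"
    using near(1,3)[of i] delta_pos[of i] theta_pos[of i] mult_left_mono by fastforce+
  moreover have "y $ i * f i x \<ge> - (B * (1 + B) * \<eta>)" "x $ i * g i y \<ge> - (B * (1 + B) * \<eta>)"
    using mult_ge_neg_of_near_nonneg[OF near(2) f_low bounds(2,3) less_imp_le[OF assms(1)]]
      mult_ge_neg_of_near_nonneg[OF near(1) g_low bounds(1,4) less_imp_le[OF assms(1)]] by simp_all
  ultimately show "x $ i = - \<eta> \<Longrightarrow> rate_R x y i \<ge> - (B * (1 + B) + 2 * B) * \<eta>"
    and "y $ i = - \<eta> \<Longrightarrow> rate_T x y i \<ge> - (B * (1 + B) + 2 * B) * \<eta>"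
    and "1 - x $ i - y $ i = - \<eta> \<Longrightarrow> - rate_R x y i - rate_T x y i \<ge> - (B * (1 + B) + 2 * B) * \<eta>"
    unfolding rate_R_def rate_T_def by (simp_all add: algebra_simps)
qed

lemma uniform_bound_on_Icc:
  "\<exists>B. \<forall>s\<in>{0..t}. \<forall>l. \<bar>R s $ l\<bar> \<le> B \<and> \<bar>T s $ l\<bar> \<le> B \<and> \<bar>f l (R s)\<bar> \<le> B \<and> \<bar>g l (T s)\<bar> \<le> B \<and>
      - f l (- 1) \<le> B \<and> - g l (- 1) \<le> B \<and> \<theta> l \<le> B \<and> \<delta> l \<le> B"
proof -
  have cont_f: "continuous_on {0..t} (\<lambda>s. f l (R s))" and cont_g: "continuous_on {0..t} (\<lambda>s. g l (T s))" for l
    using continuous_on_compose2[OF concave_on_UNIV_continuous[OF f_concave] continuous_on_subset[OF R_continuous]]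
      continuous_on_compose2[OF concave_on_UNIV_continuous[OF g_concave] continuous_on_subset[OF T_continuous]]
    by auto
  obtain BR where "BR \<ge> 0" and BR: "\<And>l s. s \<in> {0..t} \<Longrightarrow> \<bar>R s $ l\<bar> \<le> BR"
    using bounded_on_Icc[where I = UNIV and F = "\<lambda>l s. R s $ l" and a = 0 and b = t]
      continuous_on_nth_Icc[OF R_continuous] by auto
  obtain BT where "BT \<ge> 0" and BT: "\<And>l s. s \<in> {0..t} \<Longrightarrow> \<bar>T s $ l\<bar> \<le> BT"
    using bounded_on_Icc[where I = UNIV and F = "\<lambda>l s. T s $ l" and a = 0 and b = t]
      continuous_on_nth_Icc[OF T_continuous] by auto
  obtain BF where "BF \<ge> 0" and BF: "\<And>l s. s \<in> {0..t} \<Longrightarrow> \<bar>f l (R s)\<bar> \<le> BF"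
    using bounded_on_Icc[where I = UNIV and F = "\<lambda>l s. f l (R s)" and a = 0 and b = t] cont_f by auto
  obtain BG where "BG \<ge> 0" and BG: "\<And>l s. s \<in> {0..t} \<Longrightarrow> \<bar>g l (T s)\<bar> \<le> BG"
    using bounded_on_Icc[where I = UNIV and F = "\<lambda>l s. g l (T s)" and a = 0 and b = t] cont_g by auto
  define C where "C = (\<Sum>l\<in>UNIV. \<bar>f l (- 1)\<bar> + \<bar>g l (- 1)\<bar> + \<theta> l + \<delta> l)"
  have C: "\<bar>f l (- 1)\<bar> + \<bar>g l (- 1)\<bar> + \<theta> l + \<delta> l \<le> C" "0 < \<theta> l" "0 < \<delta> l" for l
    unfolding C_def using theta_pos delta_pos
    by (fastforce intro: member_le_sum add_nonneg_nonneg less_imp_le)+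
  have "\<forall>s\<in>{0..t}. \<forall>l. \<bar>R s $ l\<bar> \<le> B \<and> \<bar>T s $ l\<bar> \<le> B \<and> \<bar>f l (R s)\<bar> \<le> B \<and> \<bar>g l (T s)\<bar> \<le> B \<and>
      - f l (- 1) \<le> B \<and> - g l (- 1) \<le> B \<and> \<theta> l \<le> B \<and> \<delta> l \<le> B"
    if "B = BR + BT + BF + BG + C" for B
    using that \<open>BR \<ge> 0\<close> \<open>BT \<ge> 0\<close> \<open>BF \<ge> 0\<close> \<open>BG \<ge> 0\<close> BR BT BF BG C by (smt (verit))
  then show ?thesis by blast
qed

lemma Omega_invariant:
  assumes "0 \<le> t"
  shows "0 \<le> R t $ i \<and> 0 \<le> T t $ i \<and> R t $ i + T t $ i \<le> 1"
proof -
  have cont_R: "continuous_on {0..t} (\<lambda>s. R s $ l)" and cont_T: "continuous_on {0..t} (\<lambda>s. T s $ l)" for l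
    using continuous_on_nth_Icc R_continuous T_continuous by blast+
  obtain B where bounds: "\<forall>s\<in>{0..t}. \<forall>l. \<bar>R s $ l\<bar> \<le> B \<and> \<bar>T s $ l\<bar> \<le> B \<and> \<bar>f l (R s)\<bar> \<le> B \<and>
      \<bar>g l (T s)\<bar> \<le> B \<and> - f l (- 1) \<le> B \<and> - g l (- 1) \<le> B \<and> \<theta> l \<le> B \<and> \<delta> l \<le> B"
    using uniform_bound_on_Icc by blast
  \<comment> \<open>\<open>\<Omega>\<close> is where the \<open>3N\<close> functions \<open>R\<^sub>l, T\<^sub>l, 1 - R\<^sub>l - T\<^sub>l\<close>, indexed by \<open>(l, m)\<close>, are nonnegative.\<close>
  define y where "y = (\<lambda>(l, m) s. [R s $ l, T s $ l, 1 - R s $ l - T s $ l] ! m)"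
  have "0 \<le> y (i, m) t" if "m \<in> {0, 1, 2}" for m
  proof (rule nonneg_invariance[where y = y and k = "(i, m)" and K = "UNIV \<times> {0, 1, 2}" and b = t
        and \<eta>\<^sub>0 = 1 and M = "B * (1 + B) + 2 * B"])
    show "continuous_on {0..t} (y k)" if "k \<in> UNIV \<times> {0, 1, 2}" for k
      using that by (auto simp: y_def intro!: continuous_on_diff continuous_on_const cont_R cont_T)
    show "0 \<le> y k 0" if "k \<in> UNIV \<times> {0, 1, 2}" for k
      using that init_Omega[of "fst k"] by (auto simp: y_def)
  next
    fix k s \<eta> assume k: "k \<in> UNIV \<times> {0, 1, 2}" and s: "0 < s" "s \<le> t" and \<eta>: "0 < \<eta>" "\<eta> \<le> 1"
      and near: "\<forall>j\<in>UNIV \<times> {0, 1, 2}. - \<eta> \<le> y j s" and boundary: "y k s = - \<eta>"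
    have near_Omega: "- \<eta> \<le> R s $ l" "- \<eta> \<le> T s $ l" "- \<eta> \<le> 1 - R s $ l - T s $ l" for l
      using near[rule_format, of "(l, 0)"] near[rule_format, of "(l, 1)"] near[rule_format, of "(l, 2)"]
      by (simp_all add: y_def)
    have "s \<in> {0..t}" using s by simp
    then have B_s: "\<And>l. \<bar>R s $ l\<bar> \<le> B" "\<And>l. \<bar>T s $ l\<bar> \<le> B" "\<And>l. \<bar>f l (R s)\<bar> \<le> B"
      "\<And>l. \<bar>g l (T s)\<bar> \<le> B" "\<And>l. - f l (- 1) \<le> B" "\<And>l. - g l (- 1) \<le> B"
      "\<And>l. \<theta> l \<le> B" "\<And>l. \<delta> l \<le> B"
      using bounds by auto
    note rate_bounds = rates_near_Omega[OF \<eta> near_Omega B_s]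
    obtain l m' where lm: "k = (l, m')" "m' \<in> {0, 1, 2}" using k by auto
    then consider "m' = 0" | "m' = 1" | "m' = 2" by auto
    then show "\<exists>D. (y k has_real_derivative D) (at s) \<and> - (B * (1 + B) + 2 * B) * \<eta> \<le> D"
    proof cases
      case 1
      then have "y k = (\<lambda>s. R s $ l)" using lm by (simp add: y_def)
      then show ?thesis using R_deriv[OF s(1)] rate_bounds(1) boundary by auto
    next
      case 2
      then have "y k = (\<lambda>s. T s $ l)" using lm by (simp add: y_def)
      then show ?thesis using T_deriv[OF s(1)] rate_bounds(2) boundary by auto
    next
      case 3
      then have "y k = (\<lambda>s. 1 - R s $ l - T s $ l)" using lm by (simp add: y_def)
      then show ?thesis
        using DERIV_diff[OF DERIV_diff[OF DERIV_const[of 1] R_deriv[OF s(1), of l]] T_deriv[OF s(1), of l]]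
          rate_bounds(3)[of l] boundary
        by auto
    qed
  qed (use that \<open>0 \<le> t\<close> in auto)
  from this[of 0] this[of 1] this[of 2] show ?thesis
    by (simp add: y_def)
qed

lemma T_le_1: "0 \<le> t \<Longrightarrow> T t $ i \<le> 1"
  using Omega_invariant[of t i] by linarith

lemma R_pos:
  assumes "\<And>i. R 0 $ i > 0" "0 \<le> t"
  shows "R t $ i > 0"
proof -
  have "exp (- (g i 1 + \<theta> i) * (t - 0)) * R 0 $ i \<le> R t $ i"
  proof (rule exp_lower_bound_of_deriv_ge)
    show "continuous_on {0..t} (\<lambda>s. R s $ i)"
      using continuous_on_nth_Icc[OF R_continuous] .
  next
    fix s assume "0 < s" "s < t"
    have "0 \<le> T s $ i * f i (R s)"
      using Omega_invariant[of s] f_mono[of 0 "R s" i] f_zero \<open>0 < s\<close> by simp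
    moreover have "R s $ i * g i (T s) \<le> R s $ i * g i 1"
      using Omega_invariant[of s i] g_mono[of "T s" 1 i] T_le_1 \<open>0 < s\<close> by (simp add: mult_left_mono)
    ultimately have "- (g i 1 + \<theta> i) * R s $ i \<le> rate_R (R s) (T s) i"
      by (simp add: rate_R_def algebra_simps)
    then show "\<exists>D. ((\<lambda>s. R s $ i) has_real_derivative D) (at s) \<and> - (g i 1 + \<theta> i) * R s $ i \<le> D"
      using R_deriv[OF \<open>0 < s\<close>] by blast
  qed (use assms in simp)
  then show ?thesis
    using assms by (smt (verit) exp_gt_zero mult_pos_pos)
qed

lemma R_plus_T_lower:
  assumes "0 \<le> t"
  shows "\<delta> i / (\<theta> i + \<delta> i) - exp (- (\<theta> i + \<delta> i) * t) \<le> R t $ i + T t $ i"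
proof -
  define a where "a = \<delta> i / (\<theta> i + \<delta> i)"
  have "0 < \<theta> i + \<delta> i" "a < 1" "(\<theta> i + \<delta> i) * a = \<delta> i"
    using theta_pos[of i] delta_pos[of i] by (auto simp: a_def)
  have "exp (- (\<theta> i + \<delta> i) * (t - 0)) * (R 0 $ i + T 0 $ i - a) \<le> R t $ i + T t $ i - a"
  proof (rule exp_lower_bound_of_deriv_ge)
    show "continuous_on {0..t} (\<lambda>s. R s $ i + T s $ i - a)"
      by (intro continuous_on_diff continuous_on_add continuous_on_const
          continuous_on_nth_Icc R_continuous T_continuous)
  next
    fix s assume "0 < s" "s < t"
    have "\<theta> i * R s $ i \<le> \<theta> i * (R s $ i + T s $ i)"
      using Omega_invariant[of s i] theta_pos[of i] \<open>0 < s\<close> by (intro mult_left_mono) auto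
    then have "- (\<theta> i + \<delta> i) * (R s $ i + T s $ i - a) \<le> rate_R (R s) (T s) i + rate_T (R s) (T s) i"
      using \<open>(\<theta> i + \<delta> i) * a = \<delta> i\<close> by (simp add: rate_R_def rate_T_def algebra_simps)
    moreover have "((\<lambda>s. R s $ i + T s $ i - a) has_real_derivative
        rate_R (R s) (T s) i + rate_T (R s) (T s) i) (at s)"
      using R_deriv[OF \<open>0 < s\<close>] T_deriv[OF \<open>0 < s\<close>] by (auto intro!: derivative_eq_intros)
    ultimately show "\<exists>D. ((\<lambda>s. R s $ i + T s $ i - a) has_real_derivative D) (at s) \<and>
        - (\<theta> i + \<delta> i) * (R s $ i + T s $ i - a) \<le> D"
      by blast
  qed (use assms in simp)
  moreover have "- exp (- (\<theta> i + \<delta> i) * t) \<le> exp (- (\<theta> i + \<delta> i) * t) * (R 0 $ i + T 0 $ i - a)"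
    using mult_left_mono[of "- 1" "R 0 $ i + T 0 $ i - a" "exp (- (\<theta> i + \<delta> i) * t)"]
      init_Omega[of i] \<open>a < 1\<close> by simp
  ultimately show ?thesis
    unfolding a_def by simp
qed

lemma T_eventually_lower:
  assumes "0 < \<nu>"
  shows "\<exists>t\<^sub>0\<ge>0. \<forall>t\<ge>t\<^sub>0. \<forall>i. \<delta> i / (\<theta> i + \<delta> i) - \<nu> - R t $ i \<le> T t $ i"
proof -
  have "\<forall>\<^sub>F t in at_top. \<forall>i. exp (- (\<theta> i + \<delta> i) * t) \<le> \<nu>"
  proof (intro eventually_all_finite allI)
    fix i
    have "0 < \<theta> i + \<delta> i"
      using theta_pos[of i] delta_pos[of i] by simp
    show "\<forall>\<^sub>F t in at_top. exp (- (\<theta> i + \<delta> i) * t) \<le> \<nu>"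
      using eventually_ge_at_top[of "- ln \<nu> / (\<theta> i + \<delta> i)"]
    proof eventually_elim
      case (elim t)
      then have "- (\<theta> i + \<delta> i) * t \<le> ln \<nu>"
        using \<open>0 < \<theta> i + \<delta> i\<close> by (simp add: field_simps)
      then show ?case
        using \<open>0 < \<nu>\<close> by (metis exp_le_cancel_iff exp_ln)
    qed
  qed
  then obtain t\<^sub>0 where "0 \<le> t\<^sub>0" and exp_small: "\<And>t i. t\<^sub>0 \<le> t \<Longrightarrow> exp (- (\<theta> i + \<delta> i) * t) \<le> \<nu>"
    using eventually_conj[OF eventually_ge_at_top[of 0]] unfolding eventually_at_top_linorder
    by (metis order.refl)
  have "\<delta> i / (\<theta> i + \<delta> i) - \<nu> - R t $ i \<le> T t $ i" if "t\<^sub>0 \<le> t" for t i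
    using R_plus_T_lower[of t i] exp_small[OF that, of i] that \<open>0 \<le> t\<^sub>0\<close> by linarith
  then show ?thesis
    using \<open>0 \<le> t\<^sub>0\<close> by blast
qed

lemma rate_R_pos_at_contact:
  assumes "0 < t" and above: "\<And>l. \<eta> * u $ l \<le> R t $ l" and contact: "R t $ k = \<eta> * u $ k"
    and T_lower: "a - \<nu> - R t $ k \<le> T t $ k" and lin: "\<eta> * (G \<bullet> u - \<nu>) \<le> f k (\<eta> *\<^sub>R u)"
    and "0 < \<eta>" "0 < \<nu>" "\<And>l. 0 < u $ l" "0 \<le> G \<bullet> u" "\<eta> * u $ k \<le> \<nu>" "2 * \<nu> \<le> a" "a \<le> 1"
    and small: "(2 * (G \<bullet> u) + 1) * \<nu> < s * u $ k"
    and subinv: "s * u $ k \<le> a * (G \<bullet> u) - (\<theta> k + g k 1) * u $ k"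
  shows "0 < rate_R (R t) (T t) k"
proof -
  define b where "b = a - \<nu> - \<eta> * u $ k"
  have "0 < \<eta> * u $ k"
    using \<open>0 < \<eta>\<close> \<open>\<And>l. 0 < u $ l\<close> by simp
  then have "0 \<le> b" "b \<le> 1" "b \<le> T t $ k"
    unfolding b_def using \<open>0 < \<nu>\<close> \<open>\<eta> * u $ k \<le> \<nu>\<close> \<open>2 * \<nu> \<le> a\<close> \<open>a \<le> 1\<close> T_lower contact
    by linarith+
  have "0 \<le> f k (\<eta> *\<^sub>R u)"
    using f_mono[of 0 "\<eta> *\<^sub>R u" k] f_zero \<open>0 < \<eta>\<close> \<open>\<And>l. 0 < u $ l\<close> by (simp add: less_imp_le)
  moreover have "f k (\<eta> *\<^sub>R u) \<le> f k (R t)"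
    using above by (intro f_mono) simp
  ultimately have "b * f k (\<eta> *\<^sub>R u) \<le> T t $ k * f k (R t)"
    using \<open>0 \<le> b\<close> \<open>b \<le> T t $ k\<close> by (meson mult_mono order.trans)
  moreover have "\<eta> * (b * (G \<bullet> u - \<nu>)) \<le> b * f k (\<eta> *\<^sub>R u)"
    using mult_left_mono[OF lin \<open>0 \<le> b\<close>] by (simp add: algebra_simps)
  moreover have "R t $ k * g k (T t) \<le> \<eta> * (u $ k * g k 1)"
    using g_mono[of "T t" 1 k] T_le_1 contact \<open>0 < t\<close> \<open>0 < \<eta>\<close> \<open>\<And>l. 0 < u $ l\<close>
    by (simp add: mult_left_mono)
  ultimately have rate: "\<eta> * (b * (G \<bullet> u - \<nu>) - u $ k * (g k 1 + \<theta> k)) \<le> rate_R (R t) (T t) k"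
    using contact by (simp add: rate_R_def algebra_simps)
  have "b * \<nu> \<le> \<nu>"
    using \<open>b \<le> 1\<close> \<open>0 < \<nu>\<close> by (simp add: mult_left_le_one_le)
  moreover have "(\<nu> + \<eta> * u $ k) * (G \<bullet> u) \<le> (2 * \<nu>) * (G \<bullet> u)"
    using \<open>\<eta> * u $ k \<le> \<nu>\<close> \<open>0 \<le> G \<bullet> u\<close> by (intro mult_right_mono) auto
  ultimately have "0 < b * (G \<bullet> u - \<nu>) - u $ k * (g k 1 + \<theta> k)"
    using small subinv unfolding b_def by (simp add: algebra_simps)
  then show ?thesis
    using rate \<open>0 < \<eta>\<close> by (smt (verit) mult_pos_pos)
qed

lemma R_stays_above:
  assumes "0 \<le> t\<^sub>0" "\<And>l. \<eta> * u $ l < R t\<^sub>0 $ l"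
    and contact: "\<And>t l. t\<^sub>0 < t \<Longrightarrow> (\<And>j. \<eta> * u $ j \<le> R t $ j) \<Longrightarrow> R t $ l = \<eta> * u $ l \<Longrightarrow>
        0 < rate_R (R t) (T t) l"
    and "t\<^sub>0 \<le> t"
  shows "\<eta> * u $ i < R t $ i"
proof -
  have "0 < R t $ i - \<eta> * u $ i"
  proof (rule barrier_positive[where h = "\<lambda>l s. R s $ l - \<eta> * u $ l" and K = UNIV])
    show "continuous_on {t\<^sub>0..t} (\<lambda>s. R s $ l - \<eta> * u $ l)" for l
      using continuous_on_subset[OF continuous_on_component[OF R_continuous]] \<open>0 \<le> t\<^sub>0\<close>
      by (intro continuous_on_diff continuous_on_const) auto
  next
    fix l s assume "t\<^sub>0 < s" "\<forall>j\<in>UNIV. 0 \<le> R s $ j - \<eta> * u $ j" "R s $ l - \<eta> * u $ l = 0"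
    then have "0 < rate_R (R s) (T s) l"
      by (intro contact) auto
    moreover have "((\<lambda>s. R s $ l - \<eta> * u $ l) has_real_derivative rate_R (R s) (T s) l) (at s)"
      using R_deriv[of s l] \<open>t\<^sub>0 < s\<close> \<open>0 \<le> t\<^sub>0\<close> by (auto intro!: derivative_eq_intros)
    ultimately show "\<exists>D>0. ((\<lambda>s. R s $ l - \<eta> * u $ l) has_real_derivative D) (at s)"
      by blast
  qed (use assms in auto)
  then show ?thesis by simp
qed

lemma persistent:
  fixes G :: "'n \<Rightarrow> real^'n" and u :: "real^'n"
  assumes R0_pos: "\<And>i. R 0 $ i > 0"
    and f_deriv: "\<And>i. (f i has_derivative (\<lambda>h. G i \<bullet> h)) (at 0)"
    and u_pos: "\<And>i. 0 < u $ i" and "0 < s"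
    and subinv: "\<And>i. s * u $ i \<le> \<delta> i / (\<theta> i + \<delta> i) * (G i \<bullet> u) - (\<theta> i + g i 1) * u $ i"
  shows "\<exists>c>0. \<forall>i. ereal c \<le> Liminf at_top (\<lambda>t. ereal (R t $ i))"
proof -
  define a where "a i = \<delta> i / (\<theta> i + \<delta> i)" for i
  have "0 < a i" "a i \<le> 1" for i
    using theta_pos[of i] delta_pos[of i] by (auto simp: a_def)
  have Gu_nonneg: "0 \<le> G i \<bullet> u" for i
    using concave_le_gradient[OF f_concave f_zero f_deriv, of i u] f_mono[of 0 u i] f_zero u_pos
    by (simp add: less_imp_le)
  have small: "\<forall>\<^sub>F x in at_right 0. C * x < e" if "0 < e" for C e :: real
    using order_tendstoD(2)[OF tendsto_mult_right_zero[OF tendsto_ident_at] that] .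
  \<comment> \<open>\<open>\<nu>\<close> bounds both the eventual deficit of \<open>R\<^sub>i + T\<^sub>i\<close> below \<open>a\<^sub>i\<close> and the linearisation error of \<open>f\<close>.\<close>
  have "\<forall>\<^sub>F \<nu> in at_right 0. \<forall>i. 2 * \<nu> < a i \<and> (2 * (G i \<bullet> u) + 1) * \<nu> < s * u $ i"
    using \<open>\<And>i. 0 < a i\<close> u_pos \<open>0 < s\<close>
    by (intro eventually_all_finite allI eventually_conj small) simp_all
  then obtain \<nu> where "0 < \<nu>" and "\<forall>i. 2 * \<nu> < a i \<and> (2 * (G i \<bullet> u) + 1) * \<nu> < s * u $ i"
    by (blast dest: eventually_at_right_0_exists)
  then have \<nu>: "\<And>i. 2 * \<nu> < a i" "\<And>i. (2 * (G i \<bullet> u) + 1) * \<nu> < s * u $ i"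
    by simp_all
  obtain t\<^sub>0 where "0 \<le> t\<^sub>0" and T_lower: "\<And>t i. t\<^sub>0 \<le> t \<Longrightarrow> a i - \<nu> - R t $ i \<le> T t $ i"
    using T_eventually_lower[OF \<open>0 < \<nu>\<close>] unfolding a_def by blast
  have "\<forall>\<^sub>F \<eta> in at_right 0. \<forall>i. u $ i * \<eta> < \<nu> \<and> u $ i * \<eta> < R t\<^sub>0 $ i \<and> G i \<bullet> u - \<nu> < f i (\<eta> *\<^sub>R u) / \<eta>"
  proof (intro eventually_all_finite allI eventually_conj small)
    fix i
    have "((\<lambda>\<eta>. f i (\<eta> *\<^sub>R u) / \<eta>) \<longlongrightarrow> G i \<bullet> u) (at_right 0)"
      using tendsto_directional_quotient[OF f_deriv f_zero] by (rule filterlim_mono) (simp_all add: at_le)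
    then show "\<forall>\<^sub>F \<eta> in at_right 0. G i \<bullet> u - \<nu> < f i (\<eta> *\<^sub>R u) / \<eta>"
      by (rule order_tendstoD(1)) (use \<open>0 < \<nu>\<close> in simp)
  qed (use \<open>0 < \<nu>\<close> R_pos[OF R0_pos \<open>0 \<le> t\<^sub>0\<close>] in auto)
  then obtain \<eta> where "0 < \<eta>"
    and "\<forall>i. u $ i * \<eta> < \<nu> \<and> u $ i * \<eta> < R t\<^sub>0 $ i \<and> G i \<bullet> u - \<nu> < f i (\<eta> *\<^sub>R u) / \<eta>"
    by (blast dest: eventually_at_right_0_exists)
  then have \<eta>: "\<And>i. u $ i * \<eta> < \<nu>" "\<And>i. u $ i * \<eta> < R t\<^sub>0 $ i"
    "\<And>i. G i \<bullet> u - \<nu> < f i (\<eta> *\<^sub>R u) / \<eta>"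
    by simp_all
  have lin: "\<eta> * (G i \<bullet> u - \<nu>) \<le> f i (\<eta> *\<^sub>R u)" for i
    using \<eta>(3)[of i] \<open>0 < \<eta>\<close> by (simp add: pos_less_divide_eq mult.commute less_imp_le)
  have above: "\<eta> * u $ i < R t $ i" if "t\<^sub>0 \<le> t" for t i
  proof (rule R_stays_above[OF \<open>0 \<le> t\<^sub>0\<close> _ _ that])
    show "\<eta> * u $ l < R t\<^sub>0 $ l" for l
      using \<eta>(2)[of l] by (simp add: mult.commute)
  next
    fix t l assume "t\<^sub>0 < t" "\<And>j. \<eta> * u $ j \<le> R t $ j" "R t $ l = \<eta> * u $ l"
    moreover have "a l - \<nu> - R t $ l \<le> T t $ l"
      using T_lower \<open>t\<^sub>0 < t\<close> by simp
    ultimately show "0 < rate_R (R t) (T t) l"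
      using rate_R_pos_at_contact[OF _ _ _ _ lin \<open>0 < \<eta>\<close> \<open>0 < \<nu>\<close> u_pos Gu_nonneg _ _ \<open>a l \<le> 1\<close> \<nu>(2)]
        \<nu>(1)[of l] \<eta>(1)[of l] subinv[of l] \<open>0 \<le> t\<^sub>0\<close> unfolding a_def by (simp add: less_imp_le mult.commute)
  qed
  define m where "m = Min (range (\<lambda>i. u $ i))"
  have "0 < m" "m \<le> u $ i" for i
    using u_pos by (simp_all add: m_def Min_gr_iff)
  have "ereal (\<eta> * m) \<le> Liminf at_top (\<lambda>t. ereal (R t $ i))" for i
  proof (rule Liminf_bounded)
    have "\<eta> * m \<le> R t $ i" if "t\<^sub>0 \<le> t" for t
      using mult_left_mono[OF \<open>m \<le> u $ i\<close> less_imp_le[OF \<open>0 < \<eta>\<close>]] above[OF that, of i] by simp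
    then show "\<forall>\<^sub>F t in at_top. ereal (\<eta> * m) \<le> ereal (R t $ i)"
      unfolding eventually_at_top_linorder by auto
  qed
  then show ?thesis
    using \<open>0 < \<eta>\<close> \<open>0 < m\<close> by (intro exI[of _ "\<eta> * m"]) simp
qed

end

theorem theorem4:
  fixes E_R E_T :: "('n::finite \<times> 'n) set"
    and \<theta> \<delta> :: "'n \<Rightarrow> real"
    and f g :: "'n \<Rightarrow> real^'n \<Rightarrow> real"
    and R T :: "real \<Rightarrow> real^'n"
  assumes conn_R: "strongly_connected E_R"
    and conn_T: "strongly_connected E_T"
    and theta_pos: "\<And>i. \<theta> i > 0"
    and delta_pos: "\<And>i. \<delta> i > 0"
    and C1_f: "\<And>i j. depends_on (f i) j \<longleftrightarrow> (i, j) \<in> E_R"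
    and C1_g: "\<And>i j. depends_on (g i) j \<longleftrightarrow> (i, j) \<in> E_T"
    and C2_f: "\<And>i. f i 0 = 0"
    and C2_g: "\<And>i. g i 0 = 0"
    and C3_f: "\<And>i. C2 (f i)"
    and C3_g: "\<And>i. C2 (g i)"
    and C4_f: "\<And>i j. (i, j) \<in> E_R \<Longrightarrow> strict_incr_in (f i) j"
    and C4_g: "\<And>i j. (i, j) \<in> E_T \<Longrightarrow> strict_incr_in (g i) j"
    and C5_f: "\<And>i. concave_on UNIV (f i)"
    and C5_g: "\<And>i. concave_on UNIV (g i)"
    and Q2_pos: "spectral_abscissa
        ((jacobian0 f - diag \<theta>)
         - diag (\<lambda>i. \<theta> i / (\<theta> i + \<delta> i)) ** jacobian0 f
         - diag (\<lambda>i. g i 1)) > 0"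
    and ode_R: "\<And>t. t \<ge> 0 \<Longrightarrow> (R has_vector_derivative
        (\<chi> i. T t $ i * f i (R t) - R t $ i * g i (T t) - \<theta> i * R t $ i)) (at t within {0..})"
    and ode_T: "\<And>t. t \<ge> 0 \<Longrightarrow> (T has_vector_derivative
        (\<chi> i. R t $ i * g i (T t) - T t $ i * f i (R t) + \<delta> i * (1 - R t $ i - T t $ i))) (at t within {0..})"
    and init_Omega: "\<And>i. R 0 $ i \<ge> 0 \<and> T 0 $ i \<ge> 0 \<and> R 0 $ i + T 0 $ i \<le> 1"
    and init_R_pos: "\<And>i. R 0 $ i > 0"
  shows "\<exists>c>0. \<forall>i. Liminf at_top (\<lambda>t. ereal (R t $ i)) \<ge> ereal c"
proof -
  have f_mono: "f i x \<le> f i y" and g_mono: "g i x \<le> g i y" if "\<And>k. x $ k \<le> y $ k" for i x y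
    using le_if_le_coordinatewise[OF _ that] C1_f C4_f C1_g C4_g by blast+
  interpret surqt \<theta> \<delta> f g R T
    using theta_pos delta_pos f_mono g_mono C2_f C2_g C5_f C5_g ode_R ode_T init_Omega
    by unfold_locales auto
  have "\<forall>i. \<exists>G. (f i has_derivative (\<lambda>h. G \<bullet> h)) (at 0)"
    using C3_f unfolding C2_def by blast
  then obtain G where f_deriv: "\<And>i. (f i has_derivative (\<lambda>h. G i \<bullet> h)) (at 0)"
    by metis
  have J: "jacobian0 f $ i $ j = G i $ j" for i j
    by (rule jacobian0_nth[OF f_deriv])
  have J_nonneg: "0 \<le> jacobian0 f $ i $ j" and J_pos: "(i, j) \<in> E_R \<Longrightarrow> 0 < jacobian0 f $ i $ j" for i j
    unfolding J using concave_mono_gradient_nth_nonneg[OF C5_f C2_f f_deriv f_mono]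
      concave_strict_incr_gradient_nth_pos[OF C5_f C2_f f_deriv C4_f] by blast+
  obtain u where u_pos: "\<forall>i. 0 < u $ i" and subinv: "\<forall>i. spectral_abscissa
      ((jacobian0 f - diag \<theta>) - diag (\<lambda>i. \<theta> i / (\<theta> i + \<delta> i)) ** jacobian0 f - diag (\<lambda>i. g i 1)) * u $ i
      \<le> \<delta> i / (\<theta> i + \<delta> i) * (jacobian0 f *v u) $ i - (\<theta> i + g i 1) * u $ i"
    using Q2_positive_subinvariant[where \<theta> = \<theta> and \<delta> = \<delta> and d = "\<lambda>i. g i 1",
        OF theta_pos delta_pos J_nonneg J_pos conn_R] by blast
  moreover have "(jacobian0 f *v u) $ i = G i \<bullet> u" for i
    by (simp add: matrix_vector_mult_def J inner_vec_def)
  ultimately show ?thesis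
    using persistent[where u = u, OF init_R_pos f_deriv _ Q2_pos] by simp
qed

end
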